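(* Let $M$ be a $*$-left Ehresmann monoid with $M=\langle H\rangle_{(2)}$ for an atomic subset $H$. Let $h\in H$ and let $m=h_1h_2\cdots h_n$ be in $H$-canonical form. Then: (i) if $h_1\notin E$ and $h^*<h_1^+$, then $hh_1\cdots h_n$ is an $H$-canonical form of $hm$; (ii) if $h_1\in E$, or $h_1\notin E$ and $h^*\ge h_1^+$, then $hh_1\in H$ and $(hh_1)h_2\cdots h_n$ is an $H$-canonical form of $hm$; (iii) if $h_1\notin E$ and $h^*$, $h_1^+$ are incomparable, then $hh_1^+\in H$ and $(hh_1^+)h_1h_2\cdots h_n$ is an $H$-canonical form of $hm$.
   Context: A $*$-left Ehresmann monoid is a monoid $M$ with unary operations $+,*$ such that $x^+x=x$, $(x^+y^+)^+=x^+y^+$, $x^+y^+=y^+x^+$, $(xy)^+=(xy^+)^+$, $xx^*=x$, $(x^* )^*=x^*$, $x^*y^*=y^*x^*$, $(xy^* )^*y^*=(xy^* )^*$, $(x^* )^+=x^*$, $(x^+)^*=x^+$. Projections: $E=\{a^+\}=\{a^*\}$, ordered by $e\le f$ iff $ef=e$; $\sigma$ is the least monoid congruence containing $E\times E$; $\langle H\rangle_{(2)}$ is the subsemigroup generated by $H$. $H$ is atomic if: (H1) $E\subseteq H$; (H2) $h\in H,e\in E$ imply $he\in H$ and $(he)^*=h^*e$; (H3) if $h\in H$, $k\in H\setminus E$, $h^*\ge k^+$ then $hk\in H$ and $(hk)^*=k^*$; (H4) every $m\in M$ is $\sigma$-related to some $h\in H$; (H5) if $h,k,w\in H$, $hk\,\sigma\,w$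 and $k^*=w^*$, then some $u\in H$ has $u\,\sigma\,h$ and $u^*\ge k^+$. An expression $m=h_1\cdots h_n$ ($n\ge1$, $h_i\in H$) is in $H$-canonical form if $h_i^*<h_{i+1}^+$ for $1\le i<n$ and $h_i\notin E$ for $2\le i\le n$. *)

theory Defs
  imports Main
begin

text \<open>A *-left Ehresmann monoid: a monoid (type class monoid_mult) with unary
  operations pl (written x^+) and st (written x^*).\<close>

definition star_left_ehresmann :: "('a::monoid_mult \<Rightarrow> 'a) \<Rightarrow> ('a \<Rightarrow> 'a) \<Rightarrow> bool" where
  "star_left_ehresmann pl st \<longleftrightarrow>
     (\<forall>x. pl x * x = x) \<and>
     (\<forall>x y. pl (pl x * pl y) = pl x * pl y) \<and>
     (\<forall>x y. pl x * pl y = pl y * pl x) \<and>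
     (\<forall>x y. pl (x * y) = pl (x * pl y)) \<and>
     (\<forall>x. x * st x = x) \<and>
     (\<forall>x. st (st x) = st x) \<and>
     (\<forall>x y. st x * st y = st y * st x) \<and>
     (\<forall>x y. st (x * st y) * st y = st (x * st y)) \<and>
     (\<forall>x. pl (st x) = st x) \<and>
     (\<forall>x. st (pl x) = pl x)"

text \<open>Projections E = {a^+} (= {a^*} in such a monoid).\<close>
definition proj :: "('a \<Rightarrow> 'a) \<Rightarrow> 'a set" where
  "proj pl = range pl"

definition ple :: "'a::monoid_mult \<Rightarrow> 'a \<Rightarrow> bool" where
  "ple e f \<longleftrightarrow> e * f = e"

definition pless :: "'a::monoid_mult \<Rightarrow> 'a \<Rightarrow> bool" where
  "pless e f \<longleftrightarrow> ple e f \<and> e \<noteq> f"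

definition monoid_congruence :: "('a::monoid_mult \<times> 'a) set \<Rightarrow> bool" where
  "monoid_congruence R \<longleftrightarrow> equiv UNIV R \<and>
     (\<forall>a b c. (a, b) \<in> R \<longrightarrow> (c * a, c * b) \<in> R \<and> (a * c, b * c) \<in> R)"

definition sigma :: "('a::monoid_mult \<Rightarrow> 'a) \<Rightarrow> ('a \<times> 'a) set" where
  "sigma pl = \<Inter> {R. monoid_congruence R \<and> proj pl \<times> proj pl \<subseteq> R}"

inductive_set subsemigroup_gen :: "'a::monoid_mult set \<Rightarrow> 'a set" for H where
  base: "h \<in> H \<Longrightarrow> h \<in> subsemigroup_gen H"
| mult: "x \<in> subsemigroup_gen H \<Longrightarrow> y \<in> subsemigroup_gen H \<Longrightarrow> x * y \<in> subsemigroup_gen H"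

definition atomic :: "('a::monoid_mult \<Rightarrow> 'a) \<Rightarrow> ('a \<Rightarrow> 'a) \<Rightarrow> 'a set \<Rightarrow> bool" where
  "atomic pl st H \<longleftrightarrow>
     proj pl \<subseteq> H \<and>
     (\<forall>h\<in>H. \<forall>e\<in>proj pl. h * e \<in> H \<and> st (h * e) = st h * e) \<and>
     (\<forall>h\<in>H. \<forall>k\<in>H - proj pl. ple (pl k) (st h) \<longrightarrow> h * k \<in> H \<and> st (h * k) = st k) \<and>
     (\<forall>m. \<exists>h\<in>H. (m, h) \<in> sigma pl) \<and>
     (\<forall>h\<in>H. \<forall>k\<in>H. \<forall>w\<in>H. (h * k, w) \<in> sigma pl \<and> st k = st w \<longrightarrow>
        (\<exists>u\<in>H. (u, h) \<in> sigma pl \<and> ple (pl k) (st u)))"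

definition canonical :: "('a::monoid_mult \<Rightarrow> 'a) \<Rightarrow> ('a \<Rightarrow> 'a) \<Rightarrow> 'a set \<Rightarrow> 'a list \<Rightarrow> bool" where
  "canonical pl st H hs \<longleftrightarrow> hs \<noteq> [] \<and> set hs \<subseteq> H \<and>
     (\<forall>i. Suc i < length hs \<longrightarrow> pless (st (hs ! i)) (pl (hs ! Suc i))) \<and>
     (\<forall>i. 1 \<le> i \<and> i < length hs \<longrightarrow> hs ! i \<notin> proj pl)"

definition canonical_form_of :: "('a::monoid_mult \<Rightarrow> 'a) \<Rightarrow> ('a \<Rightarrow> 'a) \<Rightarrow> 'a set \<Rightarrow> 'a list \<Rightarrow> 'a \<Rightarrow> bool" where
  "canonical_form_of pl st H hs m \<longleftrightarrow> canonical pl st H hs \<and> m = prod_list hs"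

end

theory Submission
  imports Defs
begin

(* Prepending h to a canonical form h_1 ... h_n can only break canonicity at the junction
   of h and h_1.  In case (i) nothing breaks.  In case (ii) h h_1 lies in H by (H2) or (H3),
   and its right projection lies below h_1^*, hence still strictly below h_2^+.  In case (iii)
   h h_1^+ lies in H by (H2), with right projection h^* h_1^+; this is strictly below h_1^+
   because h_1^+ <= h^* fails, and h h_1^+ h_1 = h h_1.  Only (H1)-(H3) are needed, and in
   case (iii) only the failure of h_1^+ <= h^* is used, not that of h^* <= h_1^+. *)

lemma canonical_singleton: "canonical pl st H [x] \<longleftrightarrow> x \<in> H"
  by (simp add: canonical_def)

lemma canonical_Cons_Cons:
  "canonical pl st H (x # y # ys) \<longleftrightarrow>
     x \<in> H \<and> pless (st x) (pl y) \<and> y \<notin> proj pl \<and> canonical pl st H (y # ys)"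
proof -
  have tail: "(\<forall>i. 1 \<le> i \<and> i < length (z # zs) \<longrightarrow> (z # zs) ! i \<notin> proj pl) \<longleftrightarrow>
      (\<forall>w\<in>set zs. w \<notin> proj pl)" for z :: 'a and zs
    by (auto simp: all_set_conv_all_nth less_Suc_eq_0_disj)
  show ?thesis
    unfolding canonical_def tail by (auto simp: All_less_Suc2)
qed

lemma pl_in_proj: "pl x \<in> proj pl"
  by (simp add: proj_def)

context
  fixes pl st :: "'a::monoid_mult \<Rightarrow> 'a"
  assumes ehresmann: "star_left_ehresmann pl st"
begin

lemma pl_mult_self: "pl x * x = x"
  using ehresmann unfolding star_left_ehresmann_def by blast

lemma pl_commute: "pl x * pl y = pl y * pl x"
  using ehresmann unfolding star_left_ehresmann_def by blast

lemma pl_st: "pl (st x) = st x"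
  using ehresmann unfolding star_left_ehresmann_def by blast

lemma st_pl: "st (pl x) = pl x"
  using ehresmann unfolding star_left_ehresmann_def by blast

lemma st_in_proj: "st x \<in> proj pl"
  unfolding proj_def by (metis pl_st rangeI)

lemma st_proj: "e \<in> proj pl \<Longrightarrow> st e = e"
  unfolding proj_def by (auto simp: st_pl)

lemma pl_proj: "e \<in> proj pl \<Longrightarrow> pl e = e"
  unfolding proj_def by (metis pl_st st_pl rangeE)

lemma proj_idem: "e \<in> proj pl \<Longrightarrow> e * e = e"
  by (metis pl_mult_self pl_proj)

lemma proj_commute: "e \<in> proj pl \<Longrightarrow> f \<in> proj pl \<Longrightarrow> e * f = f * e"
  unfolding proj_def by (auto simp: pl_commute)

lemma ple_proj_mult_right: "f \<in> proj pl \<Longrightarrow> ple (e * f) f"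
  by (simp add: ple_def mult.assoc proj_idem)

lemma pless_proj_mult_right_iff:
  assumes "e \<in> proj pl" "f \<in> proj pl"
  shows "pless (e * f) f \<longleftrightarrow> \<not> ple f e"
proof -
  have "e * f = f \<longleftrightarrow> ple f e"
    using assms by (auto simp: ple_def proj_commute)
  then show ?thesis
    using ple_proj_mult_right[OF assms(2)] by (simp add: pless_def)
qed

lemma ple_pless_trans_proj:
  assumes "e \<in> proj pl" "f \<in> proj pl" "g \<in> proj pl"
    and "ple e f" "pless f g"
  shows "pless e g"
proof -
  have "e * g = e"
    using assms(4,5) by (metis ple_def pless_def mult.assoc)
  moreover have "e \<noteq> g"
  proof
    assume "e = g"
    then have "f * g = g * f" "f * g = f" "g * f = g"
      using assms by (auto simp: ple_def pless_def proj_commute)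
    then show False
      using assms(5) by (simp add: pless_def)
  qed
  ultimately show ?thesis
    by (simp add: pless_def ple_def)
qed

lemma canonical_replace_head:
  assumes "canonical pl st H (x # ys)" "k \<in> H" "ple (st k) (st x)"
  shows "canonical pl st H (k # ys)"
proof (cases ys)
  case Nil
  with assms(2) show ?thesis
    by (simp add: canonical_singleton)
next
  case (Cons y zs)
  with assms show ?thesis
    by (auto simp: canonical_Cons_Cons intro: ple_pless_trans_proj st_in_proj pl_in_proj)
qed

end

context
  fixes pl st :: "'a::monoid_mult \<Rightarrow> 'a" and H :: "'a set"
  assumes atomic: "atomic pl st H"
begin

lemma atomic_mult_proj:
  "h \<in> H \<Longrightarrow> e \<in> proj pl \<Longrightarrow> h * e \<in> H \<and> st (h * e) = st h * e"
  using atomic unfolding atomic_def by blast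

lemma atomic_mult_nonproj:
  "h \<in> H \<Longrightarrow> k \<in> H \<Longrightarrow> k \<notin> proj pl \<Longrightarrow> ple (pl k) (st h) \<Longrightarrow>
     h * k \<in> H \<and> st (h * k) = st k"
  using atomic unfolding atomic_def by blast

lemma atomic_mult_ple_st:
  assumes ehresmann: "star_left_ehresmann pl st"
    and "h \<in> H" "k \<in> H" "k \<in> proj pl \<or> ple (pl k) (st h)"
  shows "h * k \<in> H \<and> ple (st (h * k)) (st k)"
proof (cases "k \<in> proj pl")
  case True
  then show ?thesis
    using atomic_mult_proj[OF assms(2) True] ehresmann
    by (simp add: st_proj ple_proj_mult_right)
next
  case False
  with assms show ?thesis
    using atomic_mult_nonproj ehresmann
    by (simp add: ple_def proj_idem st_in_proj)
qed

end

theorem mainTheorem8: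
  fixes pl st :: "'a::monoid_mult \<Rightarrow> 'a" and H :: "'a set"
    and h h1 m :: 'a and hs :: "'a list"
  assumes "star_left_ehresmann pl st"
    and "atomic pl st H"
    and "subsemigroup_gen H = UNIV"
    and "h \<in> H"
    and "canonical_form_of pl st H (h1 # hs) m"
  shows "(h1 \<notin> proj pl \<and> pless (st h) (pl h1) \<longrightarrow>
            canonical_form_of pl st H (h # h1 # hs) (h * m))
       \<and> (h1 \<in> proj pl \<or> (h1 \<notin> proj pl \<and> ple (pl h1) (st h)) \<longrightarrow>
            h * h1 \<in> H \<and> canonical_form_of pl st H ((h * h1) # hs) (h * m))
       \<and> (h1 \<notin> proj pl \<and> \<not> ple (st h) (pl h1) \<and> \<not> ple (pl h1) (st h) \<longrightarrow>
            h * pl h1 \<in> H \<and> canonical_form_of pl st H ((h * pl h1) # h1 # hs) (h * m))"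
proof -
  have canon: "canonical pl st H (h1 # hs)" and m: "m = h1 * prod_list hs"
    using assms(5) by (auto simp: canonical_form_of_def)
  have h1: "h1 \<in> H"
    using canon by (auto simp: canonical_def)
  have "pl h1 * h1 = h1"
    using assms(1) by (rule pl_mult_self)
  then have products: "h * m = prod_list (h # h1 # hs)" "h * m = prod_list ((h * h1) # hs)"
      "h * m = prod_list ((h * pl h1) # h1 # hs)"
    using m by (simp_all add: mult.assoc flip: mult.assoc[of "pl h1"])
  have "h1 \<notin> proj pl \<and> pless (st h) (pl h1) \<longrightarrow> canonical pl st H (h # h1 # hs)"
    using canon assms(4) by (simp add: canonical_Cons_Cons)
  moreover have "h1 \<in> proj pl \<or> ple (pl h1) (st h) \<longrightarrow>
      h * h1 \<in> H \<and> canonical pl st H ((h * h1) # hs)"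
    using atomic_mult_ple_st[OF assms(2,1,4) h1] canonical_replace_head[OF assms(1) canon] by blast
  moreover have "h1 \<notin> proj pl \<and> \<not> ple (pl h1) (st h) \<longrightarrow>
      h * pl h1 \<in> H \<and> canonical pl st H ((h * pl h1) # h1 # hs)"
    using atomic_mult_proj[OF assms(2,4) pl_in_proj] canon
      pless_proj_mult_right_iff[OF assms(1) st_in_proj[OF assms(1)] pl_in_proj]
    by (simp add: canonical_Cons_Cons)
  ultimately show ?thesis
    unfolding canonical_form_of_def using products by blast
qed

end
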